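(* Let $n\ge1$ and $1\le i\le n$. A vector $\mu=\sum_{k=1}^n a_k\lambda_k$ (with real coefficients $a_k$) is a positive weight of the $i$-th fundamental representation $\Lambda_i$ of $a_n$ if and only if the following hold: (1) every $a_k\in\{-1,0,1\}$, not all $a_k$ are zero, the coefficient $a_k$ with the largest index $k$ among the nonzero ones equals $+1$, and the nonzero coefficients alternate in sign when ordered by their index $k$ (so the next largest nonzero one is $-1$, the next $+1$, and so on); and (2) $\sum_{k=1}^n k\,a_k=i$.
   Context: Let $e_1,\dots,e_{n+1}$ be an orthonormal basis of $\mathbb{R}^{n+1}$, $e=\sum_{i}e_i$, and $\varepsilon_i=e_i-\frac{1}{n+1}e$ ($i=1,\dots,n+1$), so that $\sum_{i=1}^{n+1}\varepsilon_i=0$; the root space of $a_n=\mathfrak{sl}_{n+1}(\mathbb C)$ is the hyperplane orthogonal to $e$. Simple roots: $\alpha_i=\varepsilon_i-\varepsilon_{i+1}$, $i=1,\dots,n$. Fundamental weights: $\lambda_i=\sum_{a=1}^i\varepsilon_a$, characterized by $\lambda_i\cdot\alpha_j=\delta_{ij}$. The $i$-th fundamental representation $\Lambda_i$ is the irreducible representation with highest weight $\lambda_i$; its weights are exactly the vectors $\sum_{k\in S}\varepsilon_k$ with $S\subseteq\{1,\dots,n+1\}$, $|S|=i$, and this set $S$ is uniquely determined by the weight. Such a weight is called positive if $n+1\notin S$, i.e. its coefficient of $\varepsilon_{n+1}$ in this $0/1$ expansion is $0$. *)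

theory Defs
  imports Complex_Main
begin

text \<open>Vectors of R^(n+1) are modelled as functions nat => real whose coordinates
  are indexed by 1..n+1 (and are 0 outside this range).\<close>

definition eps :: "nat \<Rightarrow> nat \<Rightarrow> (nat \<Rightarrow> real)" where
  "eps n i = (\<lambda>j. if j \<in> {1..n+1} then (if j = i then 1 else 0) - 1 / real (n+1) else 0)"

definition fund_weight :: "nat \<Rightarrow> nat \<Rightarrow> (nat \<Rightarrow> real)" where
  "fund_weight n k = (\<lambda>j. \<Sum>a=1..k. eps n a j)"

definition vec_of_coeffs :: "nat \<Rightarrow> (nat \<Rightarrow> real) \<Rightarrow> (nat \<Rightarrow> real)" where
  "vec_of_coeffs n a = (\<lambda>j. \<Sum>k=1..n. a k * fund_weight n k j)"

definition subset_weight :: "nat \<Rightarrow> nat set \<Rightarrow> (nat \<Rightarrow> real)" where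
  "subset_weight n S = (\<lambda>j. \<Sum>k\<in>S. eps n k j)"

definition is_weight :: "nat \<Rightarrow> nat \<Rightarrow> (nat \<Rightarrow> real) \<Rightarrow> bool" where
  "is_weight n i \<mu> \<longleftrightarrow> (\<exists>S. S \<subseteq> {1..n+1} \<and> card S = i \<and> \<mu> = subset_weight n S)"

definition positive_weight :: "nat \<Rightarrow> nat \<Rightarrow> (nat \<Rightarrow> real) \<Rightarrow> bool" where
  "positive_weight n i \<mu> \<longleftrightarrow> is_weight n i \<mu> \<and>
     n+1 \<notin> (THE S. S \<subseteq> {1..n+1} \<and> card S = i \<and> \<mu> = subset_weight n S)"

end

theory Submission imports Defs begin

text \<open>The weight of \<open>\<Lambda>\<^sub>i\<close> given by a set \<open>S\<close> with \<open>|S| = i\<close> has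
  \<open>e\<^sub>j\<close>-coordinate \<open>[j \<in> S] - i/(n+1)\<close>, while \<open>\<mu> = \<Sum>a\<^sub>k\<lambda>\<^sub>k\<close> has
  \<open>e\<^sub>j\<close>-coordinate \<open>c\<^sub>j - (\<Sum>k a\<^sub>k)/(n+1)\<close>, where \<open>c\<^sub>j = a\<^sub>j + \<dots> + a\<^sub>n\<close>
  is a tail sum and \<open>c\<^sub>n\<^sub>+\<^sub>1 = 0\<close>. Comparing coordinates, \<open>\<mu>\<close> is a positive
  weight of \<open>\<Lambda>\<^sub>i\<close> iff \<open>\<Sum>k a\<^sub>k = i\<close> and every \<open>c\<^sub>j\<close> is 0 or 1 (then
  \<open>S = {j. c\<^sub>j = 1}\<close>). As \<open>a\<^sub>k = c\<^sub>k - c\<^sub>k\<^sub>+\<^sub>1\<close>, tail sums in \<open>{0, 1}\<close>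
  correspond exactly to coefficient sequences in \<open>{-1, 0, 1}\<close> whose nonzero entries
  alternate in sign and end with \<open>+1\<close>.\<close>

definition tail_sum :: "(nat \<Rightarrow> real) \<Rightarrow> nat \<Rightarrow> nat \<Rightarrow> real" where
  "tail_sum a n j = (\<Sum>k=j..n. a k)"

lemma tail_sum_unfold: "j \<le> n \<Longrightarrow> tail_sum a n j = a j + tail_sum a n (Suc j)"
  unfolding tail_sum_def by (simp add: sum.atLeast_Suc_atMost)

lemma tail_sum_beyond: "n < j \<Longrightarrow> tail_sum a n j = 0"
  unfolding tail_sum_def by simp

lemma tail_sum_eq_if_zeros_between:
  assumes "j \<le> l" and "\<And>m. j \<le> m \<Longrightarrow> m < l \<Longrightarrow> a m = 0"
  shows "tail_sum a n j = tail_sum a n l"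
  using assms
proof (induction rule: dec_induct)
  case (step m)
  then show ?case
    by (cases "m \<le> n") (simp_all add: tail_sum_unfold tail_sum_beyond)
qed simp

lemma sum_tail_sum: "(\<Sum>j=1..n. tail_sum a n j) = (\<Sum>k=1..n. real k * a k)"
proof (induction n)
  case (Suc n)
  have "tail_sum a (Suc n) j = tail_sum a n j + a (Suc n)" if "j \<le> Suc n" for j
    using that unfolding tail_sum_def by (simp add: sum.atLeast_Suc_atMost_Suc_shift add.commute)
  then have "(\<Sum>j=1..Suc n. tail_sum a (Suc n) j) = (\<Sum>j=1..Suc n. tail_sum a n j + a (Suc n))"
    by (intro sum.cong) auto
  also have "\<dots> = (\<Sum>j=1..n. tail_sum a n j) + real (Suc n) * a (Suc n)"
    by (simp add: sum.distrib tail_sum_beyond)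
  finally show ?case
    using Suc.IH by simp
qed simp

lemma eps_apply: "j \<in> {1..n+1} \<Longrightarrow> eps n b j = of_bool (j = b) - 1 / real (n+1)"
  unfolding eps_def by simp

lemma eps_outside: "j \<notin> {1..n+1} \<Longrightarrow> eps n b j = 0"
  unfolding eps_def by (rule if_not_P)

lemma fund_weight_apply:
  "j \<in> {1..n+1} \<Longrightarrow> fund_weight n k j = of_bool (j \<le> k) - real k / real (n+1)"
  unfolding fund_weight_def by (simp add: eps_apply sum_subtractf)

lemma vec_of_coeffs_apply:
  assumes "j \<in> {1..n+1}"
  shows "vec_of_coeffs n a j = tail_sum a n j - (\<Sum>k=1..n. real k * a k) / real (n+1)"
proof -
  have "vec_of_coeffs n a j = (\<Sum>k=1..n. a k * of_bool (j \<le> k)) - (\<Sum>k=1..n. real k * a k) / real (n+1)"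
    unfolding vec_of_coeffs_def using assms
    by (simp add: fund_weight_apply algebra_simps sum_subtractf sum_divide_distrib)
  moreover have "{1..n} \<inter> {k. j \<le> k} = {j..n}"
    using assms by auto
  ultimately show ?thesis
    unfolding tail_sum_def by simp
qed

lemma vec_of_coeffs_outside: "j \<notin> {1..n+1} \<Longrightarrow> vec_of_coeffs n a j = 0"
  unfolding vec_of_coeffs_def fund_weight_def by (simp add: eps_outside)

lemma subset_weight_apply:
  assumes "S \<subseteq> {1..n+1}" and "j \<in> {1..n+1}"
  shows "subset_weight n S j = of_bool (j \<in> S) - real (card S) / real (n+1)"
proof -
  have "finite S"
    using assms(1) finite_subset by blast
  then show ?thesis
    unfolding subset_weight_def using assms by (simp add: eps_apply sum_subtractf)
qed

lemma subset_weight_outside: "j \<notin> {1..n+1} \<Longrightarrow> subset_weight n S j = 0"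
  unfolding subset_weight_def by (simp add: eps_outside)

text \<open>The cardinality hypothesis is needed: \<open>{1..n+1}\<close> and \<open>{}\<close> both give the zero weight.\<close>

lemma subset_weight_inj:
  assumes "S \<subseteq> {1..n+1}" "T \<subseteq> {1..n+1}" "card S = card T"
    and "subset_weight n S = subset_weight n T"
  shows "S = T"
proof -
  have "x \<in> S \<longleftrightarrow> x \<in> T" if "x \<in> {1..n+1}" for x
    using fun_cong[OF assms(4), of x] that assms(1-3) by (simp add: subset_weight_apply of_bool_eq_iff)
  then show ?thesis
    using assms(1,2) by blast
qed

lemma positive_weight_iff:
  "positive_weight n i \<mu> \<longleftrightarrow> (\<exists>S. S \<subseteq> {1..n} \<and> card S = i \<and> \<mu> = subset_weight n S)"
proof -
  have the_eq: "(THE S. S \<subseteq> {1..n+1} \<and> card S = i \<and> \<mu> = subset_weight n S) = S"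
    if "S \<subseteq> {1..n+1}" "card S = i" "\<mu> = subset_weight n S" for S
    using that by (intro the_equality) (simp, metis subset_weight_inj)
  show ?thesis
  proof
    assume "positive_weight n i \<mu>"
    then obtain S where S: "S \<subseteq> {1..n+1}" "card S = i" "\<mu> = subset_weight n S"
      and top: "n+1 \<notin> (THE S. S \<subseteq> {1..n+1} \<and> card S = i \<and> \<mu> = subset_weight n S)"
      unfolding positive_weight_def is_weight_def by blast
    have "n+1 \<notin> S"
      using top unfolding the_eq[OF S] .
    with S(1) have "S \<subseteq> {1..n}"
      by (auto simp: le_Suc_eq)
    with S show "\<exists>S. S \<subseteq> {1..n} \<and> card S = i \<and> \<mu> = subset_weight n S"
      by blast
  next
    assume "\<exists>S. S \<subseteq> {1..n} \<and> card S = i \<and> \<mu> = subset_weight n S"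
    then obtain S where "S \<subseteq> {1..n}" "card S = i" "\<mu> = subset_weight n S"
      by blast
    moreover have "S \<subseteq> {1..n+1}"
      using \<open>S \<subseteq> {1..n}\<close> by auto
    ultimately show "positive_weight n i \<mu>"
      unfolding positive_weight_def is_weight_def using the_eq by auto
  qed
qed

lemma vec_of_coeffs_eq_subset_weight_iff:
  assumes "S \<subseteq> {1..n}"
  shows "vec_of_coeffs n a = subset_weight n S \<longleftrightarrow>
    (\<Sum>k=1..n. real k * a k) = real (card S) \<and> (\<forall>j\<in>{1..n}. tail_sum a n j = of_bool (j \<in> S))"
    (is "_ \<longleftrightarrow> ?W = _ \<and> _")
proof -
  have S: "S \<subseteq> {1..n+1}" "n+1 \<notin> S"
    using assms by auto
  have "vec_of_coeffs n a = subset_weight n S \<longleftrightarrow>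
      (\<forall>j\<in>{1..n+1}. vec_of_coeffs n a j = subset_weight n S j)"
    by (auto simp: fun_eq_iff vec_of_coeffs_outside subset_weight_outside)
  also have "\<dots> \<longleftrightarrow> (\<forall>j\<in>insert (n+1) {1..n}.
      tail_sum a n j - ?W / real (n+1) = of_bool (j \<in> S) - real (card S) / real (n+1))"
    using S by (simp add: vec_of_coeffs_apply subset_weight_apply atLeastAtMostSuc_conv)
  also have "\<dots> \<longleftrightarrow> ?W = real (card S) \<and> (\<forall>j\<in>{1..n}. tail_sum a n j = of_bool (j \<in> S))"
    using S by (auto simp: tail_sum_beyond divide_simps)
  finally show ?thesis .
qed

lemma positive_weight_vec_of_coeffs_iff:
  "positive_weight n i (vec_of_coeffs n a) \<longleftrightarrow>
    (\<Sum>k=1..n. real k * a k) = real i \<and> (\<forall>j\<in>{1..n}. tail_sum a n j \<in> {0, 1})"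
proof
  assume "positive_weight n i (vec_of_coeffs n a)"
  then obtain S where "S \<subseteq> {1..n}" "card S = i" "vec_of_coeffs n a = subset_weight n S"
    unfolding positive_weight_iff by blast
  then show "(\<Sum>k=1..n. real k * a k) = real i \<and> (\<forall>j\<in>{1..n}. tail_sum a n j \<in> {0, 1})"
    using vec_of_coeffs_eq_subset_weight_iff by auto
next
  assume "(\<Sum>k=1..n. real k * a k) = real i \<and> (\<forall>j\<in>{1..n}. tail_sum a n j \<in> {0, 1})"
  then have W: "(\<Sum>k=1..n. real k * a k) = real i" and tails: "\<forall>j\<in>{1..n}. tail_sum a n j \<in> {0, 1}"
    by blast+
  define S where "S = {j\<in>{1..n}. tail_sum a n j = 1}"
  have tail_S: "\<forall>j\<in>{1..n}. tail_sum a n j = of_bool (j \<in> S)"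
    using tails by (auto simp: S_def)
  have "real (card S) = (\<Sum>j=1..n. of_bool (j \<in> S))"
    by (simp add: S_def Int_def)
  also have "\<dots> = (\<Sum>j=1..n. tail_sum a n j)"
    using tail_S by simp
  also have "\<dots> = real i"
    unfolding sum_tail_sum by (rule W)
  finally have "card S = i"
    by simp
  moreover have "S \<subseteq> {1..n}"
    by (auto simp: S_def)
  moreover from this have "vec_of_coeffs n a = subset_weight n S"
    using W tail_S \<open>card S = i\<close> by (simp add: vec_of_coeffs_eq_subset_weight_iff)
  ultimately show "positive_weight n i (vec_of_coeffs n a)"
    unfolding positive_weight_iff by blast
qed

definition alternating_last_positive :: "nat \<Rightarrow> (nat \<Rightarrow> real) \<Rightarrow> bool" where
  "alternating_last_positive n a \<longleftrightarrow>
     (\<forall>k\<in>{1..n}. a k \<in> {-1, 0, 1})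
     \<and> ((\<exists>k\<in>{1..n}. a k \<noteq> 0) \<longrightarrow> a (Max {k\<in>{1..n}. a k \<noteq> 0}) = 1)
     \<and> (\<forall>k\<in>{1..n}. \<forall>l\<in>{1..n}. k < l \<and> a k \<noteq> 0 \<and> a l \<noteq> 0
            \<and> (\<forall>m. k < m \<and> m < l \<longrightarrow> a m = 0) \<longrightarrow> a k = - a l)"

lemma alternating_last_positive_if_tail_sums_01:
  assumes tails: "\<forall>j\<in>{1..n}. tail_sum a n j \<in> {0, 1}"
  shows "alternating_last_positive n a"
proof -
  have tails': "tail_sum a n j \<in> {0, 1}" if "1 \<le> j" for j
    using tails that by (cases "j \<le> n") (auto simp: tail_sum_beyond)
  have coeff: "a k = tail_sum a n k - tail_sum a n (Suc k)" if "k \<in> {1..n}" for k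
    using that by (simp add: tail_sum_unfold)
  have signs: "a k \<in> {-1, 0, 1}" if "k \<in> {1..n}" for k
    using coeff[OF that] tails'[of k] tails'[of "Suc k"] that by auto
  have last: "a (Max {k\<in>{1..n}. a k \<noteq> 0}) = 1" if "\<exists>k\<in>{1..n}. a k \<noteq> 0"
  proof -
    define m where "m = Max {k\<in>{1..n}. a k \<noteq> 0}"
    have "m \<in> {k\<in>{1..n}. a k \<noteq> 0}"
      unfolding m_def using that by (intro Max_in) auto
    then have m: "m \<in> {1..n}" "a m \<noteq> 0"
      by auto
    have "a x = 0" if "m < x" "x \<le> n" for x
    proof (rule ccontr)
      assume "a x \<noteq> 0"
      then have "x \<le> m"
        unfolding m_def using that by (intro Max_ge) auto
      with \<open>m < x\<close> show False
        by simp
    qed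
    then have "tail_sum a n (Suc m) = tail_sum a n (Suc n)"
      using m by (intro tail_sum_eq_if_zeros_between) auto
    then have "a m = tail_sum a n m"
      using coeff[OF m(1)] by (simp add: tail_sum_beyond)
    with m(2) tails'[of m] m(1) show ?thesis
      unfolding m_def[symmetric] by auto
  qed
  have alternate: "a k = - a l"
    if "k \<in> {1..n}" "l \<in> {1..n}" "k < l" "a k \<noteq> 0" "a l \<noteq> 0"
      and "\<forall>m. k < m \<and> m < l \<longrightarrow> a m = 0" for k l
  proof -
    have "tail_sum a n (Suc k) = tail_sum a n l"
      using that by (intro tail_sum_eq_if_zeros_between) auto
    then have "a k = tail_sum a n k - tail_sum a n l" "a l = tail_sum a n l - tail_sum a n (Suc l)"
      using coeff that(1,2) by simp_all
    moreover have "tail_sum a n k \<in> {0, 1}" "tail_sum a n l \<in> {0, 1}" "tail_sum a n (Suc l) \<in> {0, 1}"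
      using that(1,2) tails' by auto
    ultimately show ?thesis
      using \<open>a k \<noteq> 0\<close> \<open>a l \<noteq> 0\<close> by auto
  qed
  show ?thesis
    unfolding alternating_last_positive_def using signs last alternate by blast
qed

definition first_nonzero_from :: "nat \<Rightarrow> (nat \<Rightarrow> real) \<Rightarrow> nat \<Rightarrow> nat \<Rightarrow> bool" where
  "first_nonzero_from n a j l \<longleftrightarrow> l \<in> {j..n} \<and> a l \<noteq> 0 \<and> (\<forall>x. j \<le> x \<and> x < l \<longrightarrow> a x = 0)"

lemma first_nonzero_from_skip_zero:
  "a j = 0 \<Longrightarrow> first_nonzero_from n a j l \<Longrightarrow> first_nonzero_from n a (Suc j) l"
  unfolding first_nonzero_from_def by (cases "l = j") auto

lemma first_nonzero_from_self:
  "a j \<noteq> 0 \<Longrightarrow> first_nonzero_from n a j l \<Longrightarrow> l = j"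
  unfolding first_nonzero_from_def by (auto dest: spec[of _ j])

lemma next_nonzero_coeff_cases:
  assumes "alternating_last_positive n a" and "m \<in> {1..n}" and "a m \<noteq> 0"
  obtains l where "first_nonzero_from n a (Suc m) l" "a m = - a l"
  | "\<forall>x\<in>{Suc m..n}. a x = 0" "a m = 1"
proof -
  have last: "(\<exists>k\<in>{1..n}. a k \<noteq> 0) \<longrightarrow> a (Max {k\<in>{1..n}. a k \<noteq> 0}) = 1"
    and alternate: "\<forall>k\<in>{1..n}. \<forall>l\<in>{1..n}. k < l \<and> a k \<noteq> 0 \<and> a l \<noteq> 0
            \<and> (\<forall>m. k < m \<and> m < l \<longrightarrow> a m = 0) \<longrightarrow> a k = - a l"
    using assms(1) unfolding alternating_last_positive_def by blast+
  show thesis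
  proof (cases "\<exists>l. l \<in> {Suc m..n} \<and> a l \<noteq> 0")
    case True
    then obtain l where "l \<in> {Suc m..n}" "a l \<noteq> 0" "\<forall>x<l. \<not> (x \<in> {Suc m..n} \<and> a x \<noteq> 0)"
      unfolding exists_least_iff[of "\<lambda>l. l \<in> {Suc m..n} \<and> a l \<noteq> 0"] by blast
    then have l: "first_nonzero_from n a (Suc m) l"
      unfolding first_nonzero_from_def by auto
    then have "a m = - a l"
      using assms(2,3) unfolding first_nonzero_from_def by (intro alternate[rule_format]) auto
    with l show thesis
      using that(1) by blast
  next
    case False
    then have zeros: "\<forall>x\<in>{Suc m..n}. a x = 0"
      by auto
    then have "Max {k\<in>{1..n}. a k \<noteq> 0} = m"
      using assms(2,3) by (intro Max_eqI) (auto simp: not_less_eq_eq[symmetric])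
    then have "a m = 1"
      using last assms(2,3) by auto
    with zeros show thesis
      using that(2) by blast
  qed
qed

lemma tail_sum_01_step:
  assumes alt: "alternating_last_positive n a" and m: "m \<in> {1..n}"
    and IH_01: "tail_sum a n (Suc m) \<in> {0, 1}"
    and IH_first: "\<And>l. first_nonzero_from n a (Suc m) l \<Longrightarrow> a l = 2 * tail_sum a n (Suc m) - 1"
  shows "tail_sum a n m \<in> {0, 1} \<and>
    (\<forall>l. first_nonzero_from n a m l \<longrightarrow> a l = 2 * tail_sum a n m - 1)"
proof -
  have unfold: "tail_sum a n m = a m + tail_sum a n (Suc m)"
    using m by (simp add: tail_sum_unfold)
  show ?thesis
  proof (cases "a m = 0")
    case True
    then show ?thesis
      using unfold IH_01 IH_first first_nonzero_from_skip_zero by auto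
  next
    case False
    have "a m = 2 * tail_sum a n m - 1 \<and> tail_sum a n m \<in> {0, 1}"
    proof (cases rule: next_nonzero_coeff_cases[OF alt m False])
      case (1 l)
      then show ?thesis
        using IH_first[of l] unfold IH_01 by auto
    next
      case 2
      then have "tail_sum a n (Suc m) = tail_sum a n (Suc n)"
        using m by (intro tail_sum_eq_if_zeros_between) auto
      then show ?thesis
        using 2 unfold by (simp add: tail_sum_beyond)
    qed
    then show ?thesis
      using first_nonzero_from_self[of a m] False by blast
  qed
qed

lemma tail_sums_01_if_alternating_last_positive:
  assumes alt: "alternating_last_positive n a"
  shows "\<forall>j\<in>{1..n}. tail_sum a n j \<in> {0, 1}"
proof -
  txt \<open>Downward induction on \<open>j\<close>: the first nonzero coefficient at or after \<open>j\<close>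
    is \<open>+1\<close> if \<open>c\<^sub>j = 1\<close> and \<open>-1\<close> if \<open>c\<^sub>j = 0\<close>.\<close>
  have "tail_sum a n j \<in> {0, 1} \<and> (\<forall>l. first_nonzero_from n a j l \<longrightarrow> a l = 2 * tail_sum a n j - 1)"
    if "1 \<le> j" "j \<le> n+1" for j
    using that(2)
  proof (induction rule: inc_induct)
    case base
    show ?case
      by (simp add: tail_sum_beyond first_nonzero_from_def)
  next
    case (step m)
    then show ?case
      using that(1) by (intro tail_sum_01_step[OF alt]) auto
  qed
  then show ?thesis
    by auto
qed

theorem mainTheorem2:
  fixes n i :: nat and a :: "nat \<Rightarrow> real"
  assumes "1 \<le> n" and "1 \<le> i" and "i \<le> n"
  shows "positive_weight n i (vec_of_coeffs n a) \<longleftrightarrow>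
    ((\<forall>k\<in>{1..n}. a k \<in> {-1, 0, 1})
     \<and> (\<exists>k\<in>{1..n}. a k \<noteq> 0)
     \<and> a (Max {k\<in>{1..n}. a k \<noteq> 0}) = 1
     \<and> (\<forall>k\<in>{1..n}. \<forall>l\<in>{1..n}. k < l \<and> a k \<noteq> 0 \<and> a l \<noteq> 0
            \<and> (\<forall>m. k < m \<and> m < l \<longrightarrow> a m = 0) \<longrightarrow> a k = - a l)
     \<and> (\<Sum>k=1..n. real k * a k) = real i)"
proof -
  have "positive_weight n i (vec_of_coeffs n a) \<longleftrightarrow>
      (\<Sum>k=1..n. real k * a k) = real i \<and> alternating_last_positive n a"
    using positive_weight_vec_of_coeffs_iff alternating_last_positive_if_tail_sums_01
      tail_sums_01_if_alternating_last_positive by blast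
  moreover have "\<exists>k\<in>{1..n}. a k \<noteq> 0" if "(\<Sum>k=1..n. real k * a k) = real i"
  proof (rule ccontr)
    assume "\<not> (\<exists>k\<in>{1..n}. a k \<noteq> 0)"
    then have "(\<Sum>k=1..n. real k * a k) = 0"
      by simp
    with that \<open>1 \<le> i\<close> show False
      by simp
  qed
  ultimately show ?thesis
    unfolding alternating_last_positive_def by argo
qed

end
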